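(* Suppose that $X\subset U\subset\mathbb{R}^n$, where $U$ is open and $X$ is the closure in $U$ of its interior. Then $\tau^p(X)=X\times\mathcal{P}_p^*$ for all $p\in\mathbb{N}$.
   Context: $\mathcal{P}_p$: real polynomials on $\mathbb{R}^n$ of degree $\le p$; $\mathcal{P}_p^*$ its dual; $r=\dim\mathcal{P}_p$. For $\xi\in\mathcal{P}_p^*$, $b\in\mathbb{R}^n$, $|\alpha|\le p$: $\xi_\alpha(b):=\xi(\tfrac1{\alpha!}(x-b)^\alpha)$; $\delta_a(P)=P(a)$. A bundle over $X$ with fibres in $W$ is a subset of $X\times W$ whose fibres are linear subspaces. For a bundle $E\subset X\times\mathcal{P}_p^*$: $\Delta E=\{(a,b,\xi+\eta):a,b\in X,\xi\in E_a,\eta\in E_b,|a-b|^{p-|\alpha|}|\eta_\alpha(b)|\le1\ \forall|\alpha|\le p\}$, $E'=\{(a,\xi):(a,a,\xi)\in\overline{\Delta E}\}$ (closure in $X\times X\times\mathcal{P}_p^*$), $\rho(E)=\{(a,\xi):\xi\in\operatorname{Span}E'_a\}$. With $E_0=\{(a,\lambda\delta_a):a\in X,\lambda\in\mathbb{R}\}$, the bundles $\rho^i(E_0)$ coincide for $i\ge2r$, and $\tau^p(X):=\rho^{2r}(E_0)$. *)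

theory Defs
  imports "HOL-Analysis.Analysis"
begin

text \<open>An element of the dual P_p^* is represented
by a functional on functions real^'n \<Rightarrow> real that is linear on P_p and
vanishes (canonically) outside P_p.\<close>

definition mabs :: "('n::finite \<Rightarrow> nat) \<Rightarrow> nat" where
  "mabs \<alpha> = (\<Sum>i\<in>UNIV. \<alpha> i)"

definition mfact :: "('n::finite \<Rightarrow> nat) \<Rightarrow> real" where
  "mfact \<alpha> = (\<Prod>i\<in>UNIV. fact (\<alpha> i))"

definition mpow :: "real^'n::finite \<Rightarrow> ('n \<Rightarrow> nat) \<Rightarrow> real" where
  "mpow x \<alpha> = (\<Prod>i\<in>UNIV. (x $ i) ^ (\<alpha> i))"

definition mindex :: "nat \<Rightarrow> ('n::finite \<Rightarrow> nat) set" where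
  "mindex p = {\<alpha>. mabs \<alpha> \<le> p}"

definition Poly :: "nat \<Rightarrow> (real^'n::finite \<Rightarrow> real) set" where
  "Poly p = {P. \<exists>c. P = (\<lambda>x. \<Sum>\<alpha>\<in>mindex p. c \<alpha> * mpow x \<alpha>)}"

definition Pdual :: "nat \<Rightarrow> ((real^'n::finite \<Rightarrow> real) \<Rightarrow> real) set" where
  "Pdual p = {\<xi>. (\<forall>P\<in>Poly p. \<forall>Q\<in>Poly p. \<xi> (\<lambda>x. P x + Q x) = \<xi> P + \<xi> Q)
                 \<and> (\<forall>P\<in>Poly p. \<forall>c. \<xi> (\<lambda>x. c * P x) = c * \<xi> P)
                 \<and> (\<forall>f. f \<notin> Poly p \<longrightarrow> \<xi> f = 0)}"

definition rdim :: "nat \<Rightarrow> 'n::finite itself \<Rightarrow> nat" where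
  "rdim p _ = card (mindex p :: ('n \<Rightarrow> nat) set)"

definition xi_at :: "((real^'n::finite \<Rightarrow> real) \<Rightarrow> real) \<Rightarrow> ('n \<Rightarrow> nat) \<Rightarrow> real^'n \<Rightarrow> real" where
  "xi_at \<xi> \<alpha> b = \<xi> (\<lambda>x. mpow (x - b) \<alpha> / mfact \<alpha>)"

definition delta :: "nat \<Rightarrow> real^'n::finite \<Rightarrow> (real^'n \<Rightarrow> real) \<Rightarrow> real" where
  "delta p a = (\<lambda>P. if P \<in> Poly p then P a else 0)"

definition fsum :: "((real^'n::finite \<Rightarrow> real) \<Rightarrow> real) \<Rightarrow> ((real^'n \<Rightarrow> real) \<Rightarrow> real) \<Rightarrow> (real^'n \<Rightarrow> real) \<Rightarrow> real" where
  "fsum \<xi> \<eta> = (\<lambda>f. \<xi> f + \<eta> f)"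

definition fspan :: "((real^'n::finite \<Rightarrow> real) \<Rightarrow> real) set \<Rightarrow> ((real^'n \<Rightarrow> real) \<Rightarrow> real) set" where
  "fspan S = {v. \<exists>F c. finite F \<and> F \<subseteq> S \<and> v = (\<lambda>f. \<Sum>\<eta>\<in>F. c \<eta> * \<eta> f)}"

definition DeltaB :: "nat \<Rightarrow> (real^'n::finite) set \<Rightarrow> ((real^'n) \<times> ((real^'n \<Rightarrow> real) \<Rightarrow> real)) set
    \<Rightarrow> ((real^'n) \<times> (real^'n) \<times> ((real^'n \<Rightarrow> real) \<Rightarrow> real)) set" where
  "DeltaB p X E = {(a, b, \<zeta>). a \<in> X \<and> b \<in> X \<and> (\<exists>\<xi> \<eta>. (a, \<xi>) \<in> E \<and> (b, \<eta>) \<in> E \<and> \<zeta> = fsum \<xi> \<eta> \<and>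
      (\<forall>\<alpha>\<in>mindex p. dist a b ^ (p - mabs \<alpha>) * \<bar>xi_at \<eta> \<alpha> b\<bar> \<le> 1))}"

text \<open>The closure is taken in X \<times> X \<times> P_p^*, i.e. the closure in the
ambient space (product topology; on P_p^* the topology of pointwise convergence
on P_p, which is the usual topology of the finite-dimensional space) intersected
with X \<times> X \<times> P_p^*.\<close>
definition Eprime :: "nat \<Rightarrow> (real^'n::finite) set \<Rightarrow> ((real^'n) \<times> ((real^'n \<Rightarrow> real) \<Rightarrow> real)) set
    \<Rightarrow> ((real^'n) \<times> ((real^'n \<Rightarrow> real) \<Rightarrow> real)) set" where
  "Eprime p X E = {(a, \<xi>). a \<in> X \<and> \<xi> \<in> Pdual p \<and> (a, a, \<xi>) \<in> closure (DeltaB p X E)}"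

definition rho :: "nat \<Rightarrow> (real^'n::finite) set \<Rightarrow> ((real^'n) \<times> ((real^'n \<Rightarrow> real) \<Rightarrow> real)) set
    \<Rightarrow> ((real^'n) \<times> ((real^'n \<Rightarrow> real) \<Rightarrow> real)) set" where
  "rho p X E = {(a, \<xi>). a \<in> X \<and> \<xi> \<in> fspan {\<eta>. (a, \<eta>) \<in> Eprime p X E}}"

definition E0 :: "nat \<Rightarrow> (real^'n::finite) set \<Rightarrow> ((real^'n) \<times> ((real^'n \<Rightarrow> real) \<Rightarrow> real)) set" where
  "E0 p X = {(a, \<xi>). a \<in> X \<and> (\<exists>t::real. \<xi> = (\<lambda>P. t * delta p a P))}"

definition tau :: "nat \<Rightarrow> (real^'n::finite) set \<Rightarrow> ((real^'n) \<times> ((real^'n \<Rightarrow> real) \<Rightarrow> real)) set" where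
  "tau p X = (rho p X ^^ (2 * rdim p TYPE('n))) (E0 p X)"

end

theory Submission
  imports Defs
begin

text \<open>
  Write \<open>\<epsilon>(b, \<beta>)\<close> for the functional \<open>P \<mapsto> \<partial>\<^sup>\<beta>P(b) / \<beta>!\<close>, dual to the monomials
  \<open>(x - b)\<^sup>\<gamma>\<close>. If the fibres of a bundle \<open>E\<close> contain \<open>\<epsilon>(b, \<beta>)\<close> at every interior point \<open>b\<close>,
  then at an interior point \<open>a\<close> the difference quotients
  \<open>(\<epsilon>(a + h e\<^sub>i, \<beta>) - \<epsilon>(a, \<beta>)) / (h (\<beta>\<^sub>i + 1))\<close> lie in \<open>\<Delta>E\<close> over \<open>(a, a + h e\<^sub>i)\<close> (the
  weight \<open>|a - b|^(p - |\<beta>|)\<close> absorbs the factor \<open>1/h\<close> because \<open>|\<beta>| < p\<close>) and converge to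
  \<open>\<epsilon>(a, \<beta> + e\<^sub>i)\<close> as \<open>h \<rightarrow> 0\<close>. Hence \<open>p\<close> applications of \<open>\<rho>\<close> to \<open>E\<^sub>0\<close> put a basis of \<open>P\<^sub>p\<^sup>*\<close>
  into every fibre over the interior of \<open>X\<close>. One more application fills the fibres over the
  closure of the interior, which contains \<open>X\<close>, since there the diagonal points of \<open>\<Delta>E\<close>
  accumulate; after that the bundle is stable, and \<open>2r > p\<close>.
\<close>

section \<open>Multi-indices\<close>

lemma mindex_component_le: "\<alpha> \<in> mindex p \<Longrightarrow> \<alpha> i \<le> p"
  unfolding mindex_def mabs_def using member_le_sum[of i UNIV \<alpha>] by simp

lemma finite_mindex: "finite (mindex p :: ('n::finite \<Rightarrow> nat) set)"
proof (rule finite_subset)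
  show "mindex p \<subseteq> PiE (UNIV :: 'n set) (\<lambda>_. {..p})"
    using mindex_component_le by (auto simp: PiE_def extensional_def)
qed (rule finite_PiE; simp)

lemma mabs_fun_upd: "mabs (\<beta>(i := v)) + \<beta> i = mabs \<beta> + v"
  unfolding mabs_def by (simp add: sum.remove[of UNIV i])

lemma mabs_eq_0_iff: "mabs \<beta> = 0 \<longleftrightarrow> \<beta> = (\<lambda>_. 0)"
  unfolding mabs_def by (auto simp: fun_eq_iff)

lemma card_mindex_ge: "Suc p \<le> card (mindex p :: ('n::finite \<Rightarrow> nat) set)"
proof -
  define f :: "nat \<Rightarrow> 'n \<Rightarrow> nat" where "f j = (\<lambda>_. 0)(undefined := j)" for j
  have "mabs (f j) = j" for j
    using mabs_fun_upd[of "\<lambda>_. 0" undefined j] by (simp add: f_def mabs_def)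
  then have "f ` {..p} \<subseteq> mindex p"
    by (auto simp: mindex_def)
  moreover have "inj_on f {..p}"
    unfolding f_def inj_on_def by (metis fun_upd_same)
  ultimately show ?thesis
    using card_inj_on_le[OF _ _ finite_mindex] by fastforce
qed

lemma mfact_ge_1: "1 \<le> mfact \<alpha>"
  unfolding mfact_def by (rule prod_ge_1) simp

lemma mpow_0: "mpow 0 \<alpha> = (if \<alpha> = (\<lambda>_. 0) then 1 else 0)"
  unfolding mpow_def by (auto simp: fun_eq_iff)

definition mbinomial :: "('n::finite \<Rightarrow> nat) \<Rightarrow> ('n \<Rightarrow> nat) \<Rightarrow> real^'n \<Rightarrow> real" where
  "mbinomial \<alpha> \<gamma> c = (\<Prod>i\<in>UNIV. of_nat (\<alpha> i choose \<gamma> i) * (c $ i) ^ (\<alpha> i - \<gamma> i))"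

lemma mpow_add_expansion:
  assumes "\<alpha> \<in> mindex p"
  shows "mpow (x + c) \<alpha> = (\<Sum>\<gamma>\<in>mindex p. mbinomial \<alpha> \<gamma> c * mpow x \<gamma>)"
proof -
  have "mpow (x + c) \<alpha> =
      (\<Prod>i\<in>UNIV. \<Sum>k\<le>\<alpha> i. of_nat (\<alpha> i choose k) * (x $ i) ^ k * (c $ i) ^ (\<alpha> i - k))"
    unfolding mpow_def by (simp add: binomial_ring)
  also have "\<dots> = (\<Sum>\<gamma>\<in>PiE UNIV (\<lambda>i. {..\<alpha> i}).
      \<Prod>i\<in>UNIV. of_nat (\<alpha> i choose \<gamma> i) * (x $ i) ^ \<gamma> i * (c $ i) ^ (\<alpha> i - \<gamma> i))"
    by (rule prod_sum_PiE) auto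
  also have "\<dots> = (\<Sum>\<gamma>\<in>PiE UNIV (\<lambda>i. {..\<alpha> i}). mbinomial \<alpha> \<gamma> c * mpow x \<gamma>)"
    unfolding mbinomial_def mpow_def by (simp add: prod.distrib[symmetric] mult_ac)
  also have "\<dots> = (\<Sum>\<gamma>\<in>mindex p. mbinomial \<alpha> \<gamma> c * mpow x \<gamma>)"
  proof (rule sum.mono_neutral_left[OF finite_mindex])
    show "PiE UNIV (\<lambda>i. {..\<alpha> i}) \<subseteq> mindex p"
    proof
      fix \<gamma> assume "\<gamma> \<in> PiE UNIV (\<lambda>i. {..\<alpha> i})"
      then have "mabs \<gamma> \<le> mabs \<alpha>"
        unfolding mabs_def by (intro sum_mono) (auto simp: PiE_def Pi_def)
      with assms show "\<gamma> \<in> mindex p" by (simp add: mindex_def)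
    qed
    show "\<forall>\<gamma>\<in>mindex p - PiE UNIV (\<lambda>i. {..\<alpha> i}). mbinomial \<alpha> \<gamma> c * mpow x \<gamma> = 0"
      by (auto simp: PiE_def Pi_def extensional_def mbinomial_def not_le)
  qed
  finally show ?thesis .
qed

lemma mbinomial_axis:
  "mbinomial \<gamma> \<beta> (h *\<^sub>R axis i 1) =
     (if \<forall>j. j \<noteq> i \<longrightarrow> \<gamma> j = \<beta> j then of_nat (\<gamma> i choose \<beta> i) * h ^ (\<gamma> i - \<beta> i) else 0)"
proof -
  have "mbinomial \<gamma> \<beta> (h *\<^sub>R axis i 1) = of_nat (\<gamma> i choose \<beta> i) * h ^ (\<gamma> i - \<beta> i) *
      (\<Prod>j\<in>UNIV - {i}. of_nat (\<gamma> j choose \<beta> j) * 0 ^ (\<gamma> j - \<beta> j))"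
    unfolding mbinomial_def by (subst prod.remove[of UNIV i]) (auto simp: axis_def intro!: prod.cong)
  also have "(\<Prod>j\<in>UNIV - {i}. of_nat (\<gamma> j choose \<beta> j) * (0::real) ^ (\<gamma> j - \<beta> j)) =
      (if \<forall>j. j \<noteq> i \<longrightarrow> \<gamma> j = \<beta> j then 1 else 0)"
    by (auto simp: linorder_neq_iff)
  finally show ?thesis by auto
qed

lemma mbinomial_axis_quotient:
  assumes "h \<noteq> 0"
  shows "(mbinomial \<gamma> \<beta> (h *\<^sub>R axis i 1) - (if \<gamma> = \<beta> then 1 else 0)) / h =
    (if (\<forall>j. j \<noteq> i \<longrightarrow> \<gamma> j = \<beta> j) \<and> \<beta> i < \<gamma> i
     then of_nat (\<gamma> i choose \<beta> i) * h ^ (\<gamma> i - Suc (\<beta> i)) else 0)"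
proof (cases "\<forall>j. j \<noteq> i \<longrightarrow> \<gamma> j = \<beta> j")
  case True
  then have "\<gamma> = \<beta> \<longleftrightarrow> \<gamma> i = \<beta> i" by auto
  moreover have "x * h ^ (\<gamma> i - \<beta> i) / h = x * h ^ (\<gamma> i - Suc (\<beta> i))" if "\<beta> i < \<gamma> i" for x
    using that assms by (simp flip: Suc_diff_Suc)
  ultimately show ?thesis
    using True by (auto simp: mbinomial_axis linorder_neq_iff)
next
  case False
  then have "\<gamma> \<noteq> \<beta>" by auto
  with False show ?thesis by (auto simp: mbinomial_axis)
qed

lemma tendsto_mbinomial_axis_quotient:
  "((\<lambda>h. (mbinomial \<gamma> \<beta> (h *\<^sub>R axis i 1) - (if \<gamma> = \<beta> then 1 else 0)) / h) \<longlongrightarrow>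
     (if \<gamma> = \<beta>(i := Suc (\<beta> i)) then of_nat (Suc (\<beta> i)) else 0)) (at 0)"
proof -
  let ?P = "(\<forall>j. j \<noteq> i \<longrightarrow> \<gamma> j = \<beta> j) \<and> \<beta> i < \<gamma> i"
  have quotient: "\<forall>\<^sub>F h in at 0. (mbinomial \<gamma> \<beta> (h *\<^sub>R axis i 1) - (if \<gamma> = \<beta> then 1 else 0)) / h =
      (if ?P then of_nat (\<gamma> i choose \<beta> i) * h ^ (\<gamma> i - Suc (\<beta> i)) else 0)"
    by (rule eventually_mono[OF eventually_neq_at_within]) (rule mbinomial_axis_quotient)
  have "((\<lambda>h. if ?P then of_nat (\<gamma> i choose \<beta> i) * h ^ (\<gamma> i - Suc (\<beta> i)) else 0) \<longlongrightarrow>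
      (if \<gamma> = \<beta>(i := Suc (\<beta> i)) then of_nat (Suc (\<beta> i)) else 0)) (at (0::real))"
  proof (cases ?P)
    case P: True
    show ?thesis
    proof (cases "\<gamma> i = Suc (\<beta> i)")
      case True
      then have "\<gamma> = \<beta>(i := Suc (\<beta> i))" using P by auto
      with True P show ?thesis by simp
    next
      case False
      then have "\<gamma> \<noteq> \<beta>(i := Suc (\<beta> i))" by auto
      moreover have "((\<lambda>h. of_nat (\<gamma> i choose \<beta> i) * h ^ (\<gamma> i - Suc (\<beta> i))) \<longlongrightarrow> 0) (at (0::real))"
        using P False by (auto intro!: tendsto_eq_intros)
      ultimately show ?thesis using P False by simp
    qed
  next
    case False
    moreover have "\<gamma> \<noteq> \<beta>(i := Suc (\<beta> i))" using False by auto
    ultimately show ?thesis by (simp only: if_not_P if_False tendsto_const)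
  qed
  then show ?thesis
    by (rule tendsto_cong[OF quotient, THEN iffD2])
qed

section \<open>Polynomials and the dual space\<close>

definition monomial_at :: "real^'n::finite \<Rightarrow> ('n \<Rightarrow> nat) \<Rightarrow> real^'n \<Rightarrow> real" where
  "monomial_at b \<alpha> = (\<lambda>x. mpow (x - b) \<alpha>)"

lemma Poly_0: "(\<lambda>x. 0) \<in> Poly p"
  unfolding Poly_def by (auto intro!: exI[of _ "\<lambda>_. 0"])

lemma Poly_add: "P \<in> Poly p \<Longrightarrow> Q \<in> Poly p \<Longrightarrow> (\<lambda>x. P x + Q x) \<in> Poly p"
  unfolding Poly_def
  by clarify (rule exI[of _ "\<lambda>\<alpha>. _ \<alpha> + _ \<alpha>"], simp add: sum.distrib distrib_right)

lemma Poly_scale: "P \<in> Poly p \<Longrightarrow> (\<lambda>x. t * P x) \<in> Poly p"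
  unfolding Poly_def
  by clarify (rule exI[of _ "\<lambda>\<alpha>. t * _ \<alpha>"], simp add: sum_distrib_left mult.assoc)

lemma Poly_sum:
  "finite I \<Longrightarrow> (\<And>i. i \<in> I \<Longrightarrow> P i \<in> Poly p) \<Longrightarrow> (\<lambda>x. \<Sum>i\<in>I. d i * P i x) \<in> Poly p"
  by (induction I rule: finite_induct) (auto intro!: Poly_0 Poly_add Poly_scale)

lemma monomial_at_in_Poly: "\<alpha> \<in> mindex p \<Longrightarrow> monomial_at b \<alpha> \<in> Poly p"
  unfolding Poly_def monomial_at_def
  using mpow_add_expansion[of \<alpha> p _ "- b"] by (auto intro!: exI[of _ "\<lambda>\<gamma>. mbinomial \<alpha> \<gamma> (- b)"])

lemma Poly_expansion_at:
  assumes "f \<in> Poly p"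
  obtains d where "f = (\<lambda>x. \<Sum>\<gamma>\<in>mindex p. d \<gamma> * monomial_at b \<gamma> x)"
proof -
  obtain c where c: "f = (\<lambda>x. \<Sum>\<alpha>\<in>mindex p. c \<alpha> * mpow x \<alpha>)"
    using assms unfolding Poly_def by blast
  have "f x = (\<Sum>\<gamma>\<in>mindex p. (\<Sum>\<alpha>\<in>mindex p. c \<alpha> * mbinomial \<alpha> \<gamma> b) * monomial_at b \<gamma> x)" for x
  proof -
    have "f x = (\<Sum>\<alpha>\<in>mindex p. c \<alpha> * mpow ((x - b) + b) \<alpha>)"
      using c by simp
    also have "\<dots> = (\<Sum>\<alpha>\<in>mindex p. \<Sum>\<gamma>\<in>mindex p. c \<alpha> * mbinomial \<alpha> \<gamma> b * monomial_at b \<gamma> x)"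
      unfolding monomial_at_def
      by (intro sum.cong refl, subst mpow_add_expansion) (auto simp: sum_distrib_left mult.assoc)
    also have "\<dots> = (\<Sum>\<gamma>\<in>mindex p. (\<Sum>\<alpha>\<in>mindex p. c \<alpha> * mbinomial \<alpha> \<gamma> b) * monomial_at b \<gamma> x)"
      by (subst sum.swap) (simp add: sum_distrib_right)
    finally show ?thesis .
  qed
  then show ?thesis by (intro that) auto
qed

lemma Pdual_add: "\<xi> \<in> Pdual p \<Longrightarrow> P \<in> Poly p \<Longrightarrow> Q \<in> Poly p \<Longrightarrow> \<xi> (\<lambda>x. P x + Q x) = \<xi> P + \<xi> Q"
  unfolding Pdual_def by blast

lemma Pdual_scale: "\<xi> \<in> Pdual p \<Longrightarrow> P \<in> Poly p \<Longrightarrow> \<xi> (\<lambda>x. c * P x) = c * \<xi> P"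
  unfolding Pdual_def by blast

lemma Pdual_outside: "\<xi> \<in> Pdual p \<Longrightarrow> f \<notin> Poly p \<Longrightarrow> \<xi> f = 0"
  unfolding Pdual_def by blast

lemma Pdual_sum:
  assumes "\<xi> \<in> Pdual p" "finite I" "\<And>i. i \<in> I \<Longrightarrow> P i \<in> Poly p"
  shows "\<xi> (\<lambda>x. \<Sum>i\<in>I. d i * P i x) = (\<Sum>i\<in>I. d i * \<xi> (P i))"
  using assms(2,3)
proof (induction I rule: finite_induct)
  case empty
  show ?case using Pdual_scale[OF assms(1) Poly_0, of 0] by simp
next
  case (insert j I)
  then show ?case
    by (simp add: Pdual_add[OF assms(1)] Pdual_scale[OF assms(1)] Poly_scale Poly_sum)
qed

lemma Pdual_expansion_at:
  "\<xi> \<in> Pdual p \<Longrightarrow> \<xi> (\<lambda>x. \<Sum>\<gamma>\<in>mindex p. d \<gamma> * monomial_at b \<gamma> x) = (\<Sum>\<gamma>\<in>mindex p. d \<gamma> * \<xi> (monomial_at b \<gamma>))"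
  by (rule Pdual_sum) (auto simp: finite_mindex monomial_at_in_Poly)

lemma Pdual_eqI:
  assumes "\<xi> \<in> Pdual p" "\<eta> \<in> Pdual p" "\<And>\<gamma>. \<gamma> \<in> mindex p \<Longrightarrow> \<xi> (monomial_at b \<gamma>) = \<eta> (monomial_at b \<gamma>)"
  shows "\<xi> = \<eta>"
proof
  fix f
  show "\<xi> f = \<eta> f"
  proof (cases "f \<in> Poly p")
    case True
    then obtain d where "f = (\<lambda>x. \<Sum>\<gamma>\<in>mindex p. d \<gamma> * monomial_at b \<gamma> x)"
      by (rule Poly_expansion_at)
    then show ?thesis using assms by (simp add: Pdual_expansion_at)
  next
    case False
    then show ?thesis using assms by (simp add: Pdual_outside)
  qed
qed

lemma Pdual_lincomb: "\<xi> \<in> Pdual p \<Longrightarrow> \<eta> \<in> Pdual p \<Longrightarrow> (\<lambda>f. s * \<xi> f + t * \<eta> f) \<in> Pdual p"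
  unfolding Pdual_def by (simp add: algebra_simps)

lemma zero_in_Pdual: "(\<lambda>f. 0) \<in> Pdual p"
  unfolding Pdual_def by simp

lemma delta_in_Pdual: "delta p a \<in> Pdual p"
  unfolding Pdual_def delta_def by (simp add: Poly_add Poly_scale)

lemma fspan_subset_Pdual:
  assumes "S \<subseteq> Pdual p"
  shows "fspan S \<subseteq> Pdual p"
proof -
  have "(\<lambda>f. \<Sum>\<eta>\<in>F. c \<eta> * \<eta> f) \<in> Pdual p" if "finite F" "F \<subseteq> Pdual p" for F c
    using that
    by (induction F rule: finite_induct) (auto intro: zero_in_Pdual Pdual_lincomb[where t = 1, simplified])
  then show ?thesis
    using assms unfolding fspan_def by blast
qed

lemma fspan_base: "\<xi> \<in> S \<Longrightarrow> \<xi> \<in> fspan S"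
  unfolding fspan_def by (intro CollectI exI[of _ "{\<xi>}"] exI[of _ "\<lambda>_. 1"]) auto

lemma fspan_zero: "(\<lambda>f. 0) \<in> fspan S"
  unfolding fspan_def by (intro CollectI exI[of _ "{}"]) auto

lemma fspan_lincomb:
  assumes "v \<in> fspan S" "w \<in> fspan S"
  shows "(\<lambda>f. s * v f + t * w f) \<in> fspan S"
proof -
  obtain F c where F: "finite F" "F \<subseteq> S" "v = (\<lambda>f. \<Sum>\<eta>\<in>F. c \<eta> * \<eta> f)"
    using assms(1) unfolding fspan_def by blast
  obtain G d where G: "finite G" "G \<subseteq> S" "w = (\<lambda>f. \<Sum>\<eta>\<in>G. d \<eta> * \<eta> f)"
    using assms(2) unfolding fspan_def by blast
  define e where "e \<eta> = s * (if \<eta> \<in> F then c \<eta> else 0) + t * (if \<eta> \<in> G then d \<eta> else 0)" for \<eta>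
  have restrict: "(\<Sum>\<eta>\<in>F \<union> G. (if \<eta> \<in> H then k \<eta> else 0) * \<eta> f) = (\<Sum>\<eta>\<in>H. k \<eta> * \<eta> f)"
    if "H \<subseteq> F \<union> G" for H k f
    using that F(1) G(1)
    by (simp add: if_distrib[of "\<lambda>x. x * _"] sum.inter_restrict[symmetric] Int_absorb1 cong: if_cong)
  have "(\<lambda>f. s * v f + t * w f) = (\<lambda>f. \<Sum>\<eta>\<in>F \<union> G. e \<eta> * \<eta> f)"
    by (simp only: e_def distrib_right sum.distrib mult.assoc flip: sum_distrib_left)
      (simp add: restrict F(3) G(3))
  then show ?thesis
    unfolding fspan_def using F G by blast
qed

section \<open>Limits of functionals\<close>

lemma tendsto_fun_componentwise:
  fixes f :: "'a \<Rightarrow> 'b \<Rightarrow> 'c::topological_space"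
  shows "(f \<longlongrightarrow> g) F \<longleftrightarrow> (\<forall>x. ((\<lambda>t. f t x) \<longlongrightarrow> g x) F)"
  using limitin_componentwise[of "\<lambda>_. euclidean" UNIV f g F]
  by (simp add: euclidean_product_topology)

lemma Pdual_tendsto:
  fixes \<zeta>s :: "'a \<Rightarrow> (real^'n::finite \<Rightarrow> real) \<Rightarrow> real"
  assumes F: "F \<noteq> bot" and \<zeta>s: "\<And>t. \<zeta>s t \<in> Pdual p"
    and lim: "\<And>\<gamma>. \<gamma> \<in> mindex p \<Longrightarrow> ((\<lambda>t. \<zeta>s t (monomial_at b \<gamma>)) \<longlongrightarrow> c \<gamma>) F"
  obtains \<zeta> where "\<zeta> \<in> Pdual p" "(\<zeta>s \<longlongrightarrow> \<zeta>) F" "\<And>\<gamma>. \<gamma> \<in> mindex p \<Longrightarrow> \<zeta> (monomial_at b \<gamma>) = c \<gamma>"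
proof
  have "\<exists>L. ((\<lambda>t. \<zeta>s t f) \<longlongrightarrow> L) F" for f
  proof (cases "f \<in> Poly p")
    case True
    then obtain d where "f = (\<lambda>x. \<Sum>\<gamma>\<in>mindex p. d \<gamma> * monomial_at b \<gamma> x)"
      by (rule Poly_expansion_at)
    then have "(\<lambda>t. \<zeta>s t f) = (\<lambda>t. \<Sum>\<gamma>\<in>mindex p. d \<gamma> * \<zeta>s t (monomial_at b \<gamma>))"
      using \<zeta>s by (simp add: Pdual_expansion_at)
    moreover have "((\<lambda>t. \<Sum>\<gamma>\<in>mindex p. d \<gamma> * \<zeta>s t (monomial_at b \<gamma>)) \<longlongrightarrow>
        (\<Sum>\<gamma>\<in>mindex p. d \<gamma> * c \<gamma>)) F"
      using lim by (intro tendsto_intros)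
    ultimately show ?thesis by auto
  next
    case False
    then show ?thesis
      using Pdual_outside[OF \<zeta>s] by auto
  qed
  then have pointwise: "((\<lambda>t. \<zeta>s t f) \<longlongrightarrow> Lim F (\<lambda>t. \<zeta>s t f)) F" for f
    using tendsto_Lim[OF F] by metis
  let ?\<zeta> = "\<lambda>f. Lim F (\<lambda>t. \<zeta>s t f)"
  have unique: "((\<lambda>t. \<zeta>s t f) \<longlongrightarrow> L) F \<Longrightarrow> ?\<zeta> f = L" for f L
    by (rule tendsto_Lim[OF F])
  show "(\<zeta>s \<longlongrightarrow> ?\<zeta>) F"
    unfolding tendsto_fun_componentwise by (simp add: pointwise)
  show "?\<zeta> (monomial_at b \<gamma>) = c \<gamma>" if "\<gamma> \<in> mindex p" for \<gamma>
    using lim[OF that] by (rule unique)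
  show "?\<zeta> \<in> Pdual p"
    unfolding Pdual_def
  proof (intro CollectI conjI ballI allI impI)
    fix P Q :: "real^'n \<Rightarrow> real" assume "P \<in> Poly p" "Q \<in> Poly p"
    then show "?\<zeta> (\<lambda>x. P x + Q x) = ?\<zeta> P + ?\<zeta> Q"
      by (intro unique) (simp add: Pdual_add[OF \<zeta>s] tendsto_add pointwise)
  next
    fix P :: "real^'n \<Rightarrow> real" and c assume "P \<in> Poly p"
    then show "?\<zeta> (\<lambda>x. c * P x) = c * ?\<zeta> P"
      by (intro unique) (simp add: Pdual_scale[OF \<zeta>s] tendsto_mult_left pointwise)
  next
    fix f :: "real^'n \<Rightarrow> real" assume "f \<notin> Poly p"
    then show "?\<zeta> f = 0"
      using Pdual_outside[OF \<zeta>s] by (intro unique) simp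
  qed
qed

section \<open>Linear bundles and \<open>\<rho>\<close>\<close>

definition linear_bundle ::
    "nat \<Rightarrow> (real^'n::finite) set \<Rightarrow> ((real^'n) \<times> ((real^'n \<Rightarrow> real) \<Rightarrow> real)) set \<Rightarrow> bool" where
  "linear_bundle p X E \<longleftrightarrow> E \<subseteq> X \<times> Pdual p \<and> (\<forall>a\<in>X. (a, \<lambda>f. 0) \<in> E) \<and>
     (\<forall>a \<xi> \<eta> s t. (a, \<xi>) \<in> E \<longrightarrow> (a, \<eta>) \<in> E \<longrightarrow> (a, \<lambda>f. s * \<xi> f + t * \<eta> f) \<in> E)"

lemma linear_bundle_subset: "linear_bundle p X E \<Longrightarrow> (a, \<xi>) \<in> E \<Longrightarrow> a \<in> X \<and> \<xi> \<in> Pdual p"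
  unfolding linear_bundle_def by blast

lemma linear_bundle_zero: "linear_bundle p X E \<Longrightarrow> a \<in> X \<Longrightarrow> (a, \<lambda>f. 0) \<in> E"
  unfolding linear_bundle_def by blast

lemma linear_bundle_lincomb:
  "linear_bundle p X E \<Longrightarrow> (a, \<xi>) \<in> E \<Longrightarrow> (a, \<eta>) \<in> E \<Longrightarrow> (a, \<lambda>f. s * \<xi> f + t * \<eta> f) \<in> E"
  unfolding linear_bundle_def by blast

lemma linear_bundle_scale: "linear_bundle p X E \<Longrightarrow> (a, \<xi>) \<in> E \<Longrightarrow> (a, \<lambda>f. c * \<xi> f) \<in> E"
  using linear_bundle_lincomb[of p X E a \<xi> \<xi> c 0] by simp

lemma linear_bundle_sum:
  assumes "linear_bundle p X E" "a \<in> X" "finite I" "\<And>i. i \<in> I \<Longrightarrow> (a, \<xi> i) \<in> E"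
  shows "(a, \<lambda>f. \<Sum>i\<in>I. c i * \<xi> i f) \<in> E"
  using assms(3,4)
  by (induction I rule: finite_induct)
    (auto intro: linear_bundle_zero[OF assms(1,2)] linear_bundle_lincomb[OF assms(1), where t = 1, simplified])

lemma linear_bundle_E0: "linear_bundle p X (E0 p X)"
  unfolding linear_bundle_def E0_def
proof (intro conjI allI impI ballI subsetI)
  fix x assume "x \<in> {(a, \<xi>). a \<in> X \<and> (\<exists>t. \<xi> = (\<lambda>P. t * delta p a P))}"
  then show "x \<in> X \<times> Pdual p"
    using Pdual_lincomb[OF delta_in_Pdual zero_in_Pdual, where t = 0] by auto
next
  fix a \<xi> \<eta> s t
  assume "(a, \<xi>) \<in> {(a, \<xi>). a \<in> X \<and> (\<exists>t. \<xi> = (\<lambda>P. t * delta p a P))}"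
    "(a, \<eta>) \<in> {(a, \<xi>). a \<in> X \<and> (\<exists>t. \<xi> = (\<lambda>P. t * delta p a P))}"
  then obtain u v where "a \<in> X" "\<xi> = (\<lambda>P. u * delta p a P)" "\<eta> = (\<lambda>P. v * delta p a P)"
    by blast
  then show "(a, \<lambda>f. s * \<xi> f + t * \<eta> f) \<in> {(a, \<xi>). a \<in> X \<and> (\<exists>t. \<xi> = (\<lambda>P. t * delta p a P))}"
    by (auto simp: algebra_simps intro!: exI[of _ "s * u + t * v"])
qed (auto intro!: exI[of _ 0])

lemma linear_bundle_rho: "linear_bundle p X E \<Longrightarrow> linear_bundle p X (rho p X E)"
  using fspan_subset_Pdual[of "{\<eta>. (_, \<eta>) \<in> Eprime p X E}" p]
  unfolding linear_bundle_def rho_def by (auto simp: Eprime_def fspan_zero fspan_lincomb)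

lemma linear_bundle_rho_iterate: "linear_bundle p X ((rho p X ^^ k) (E0 p X))"
  by (induction k) (simp_all add: linear_bundle_E0 linear_bundle_rho)

lemma DeltaB_diagI:
  assumes "linear_bundle p X E" "(a, \<xi>) \<in> E"
  shows "(a, a, \<xi>) \<in> DeltaB p X E"
proof -
  have "a \<in> X" using assms linear_bundle_subset by blast
  moreover have "(a, \<lambda>f. 0) \<in> E" using assms(1) calculation by (rule linear_bundle_zero)
  moreover have "\<xi> = fsum \<xi> (\<lambda>f. 0)" by (simp add: fsum_def)
  ultimately show ?thesis
    unfolding DeltaB_def xi_at_def using assms(2) by force
qed

lemma rho_memI:
  assumes "a \<in> X" "\<zeta> \<in> Pdual p" "(a, a, \<zeta>) \<in> closure (DeltaB p X E)"
  shows "(a, \<zeta>) \<in> rho p X E"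
  using assms unfolding rho_def Eprime_def by (auto intro: fspan_base)

lemma subset_rho: "linear_bundle p X E \<Longrightarrow> E \<subseteq> rho p X E"
  using DeltaB_diagI linear_bundle_subset closure_subset by (fast intro: rho_memI)

section \<open>Raising the degree of dual monomials\<close>

text \<open>\<open>\<xi>\<close> is the functional \<open>P \<mapsto> \<partial>\<^sup>\<beta>P(b) / \<beta>!\<close>.\<close>
definition dual_monomial ::
    "nat \<Rightarrow> real^'n::finite \<Rightarrow> ('n \<Rightarrow> nat) \<Rightarrow> ((real^'n \<Rightarrow> real) \<Rightarrow> real) \<Rightarrow> bool" where
  "dual_monomial p b \<beta> \<xi> \<longleftrightarrow>
     \<xi> \<in> Pdual p \<and> (\<forall>\<gamma>\<in>mindex p. \<xi> (monomial_at b \<gamma>) = (if \<gamma> = \<beta> then 1 else 0))"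

lemma dual_monomial_xi_at:
  assumes "dual_monomial p b \<beta> \<xi>" "\<alpha> \<in> mindex p"
  shows "xi_at \<xi> \<alpha> b = (if \<alpha> = \<beta> then 1 / mfact \<beta> else 0)"
proof -
  have "xi_at \<xi> \<alpha> b = \<xi> (\<lambda>x. (1 / mfact \<alpha>) * monomial_at b \<alpha> x)"
    by (simp add: xi_at_def monomial_at_def)
  also have "\<dots> = (1 / mfact \<alpha>) * \<xi> (monomial_at b \<alpha>)"
    using assms by (intro Pdual_scale monomial_at_in_Poly) (auto simp: dual_monomial_def)
  finally show ?thesis
    using assms by (simp add: dual_monomial_def)
qed

lemma dual_monomial_shift:
  assumes "dual_monomial p b \<beta> \<xi>" "\<beta> \<in> mindex p" "\<gamma> \<in> mindex p"
  shows "\<xi> (monomial_at (b - c) \<gamma>) = mbinomial \<gamma> \<beta> c"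
proof -
  have "monomial_at (b - c) \<gamma> = (\<lambda>x. \<Sum>\<delta>\<in>mindex p. mbinomial \<gamma> \<delta> c * monomial_at b \<delta> x)"
    using mpow_add_expansion[OF assms(3), of "_ - b" c]
    by (simp add: monomial_at_def fun_eq_iff algebra_simps)
  then have "\<xi> (monomial_at (b - c) \<gamma>) = (\<Sum>\<delta>\<in>mindex p. mbinomial \<gamma> \<delta> c * (if \<delta> = \<beta> then 1 else 0))"
    using assms(1) Pdual_expansion_at[of \<xi> p "\<lambda>\<delta>. mbinomial \<gamma> \<delta> c" b]
    unfolding dual_monomial_def by simp
  then show ?thesis
    using assms(2) by (simp add: finite_mindex if_distrib cong: if_cong)
qed

lemma DeltaB_difference_quotient:
  assumes E: "linear_bundle p X E" and "(a, \<xi>) \<in> E" "(b, \<eta>) \<in> E"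
    and \<eta>: "dual_monomial p b \<beta> \<eta>" and \<beta>: "Suc (mabs \<beta>) \<le> p"
    and "dist a b \<le> 1" "dist a b \<le> \<bar>c\<bar>"
  shows "(a, b, \<lambda>f. (\<eta> f - \<xi> f) / c) \<in> DeltaB p X E"
proof -
  let ?\<xi> = "\<lambda>f. (- inverse c) * \<xi> f" and ?\<eta> = "\<lambda>f. inverse c * \<eta> f"
  have "(a, ?\<xi>) \<in> E" "(b, ?\<eta>) \<in> E"
    using linear_bundle_scale[OF E assms(2)] linear_bundle_scale[OF E assms(3)] by blast+
  moreover have "(\<lambda>f. (\<eta> f - \<xi> f) / c) = fsum ?\<xi> ?\<eta>"
    by (simp add: fsum_def fun_eq_iff divide_inverse algebra_simps)
  moreover have "dist a b ^ (p - mabs \<alpha>) * \<bar>xi_at ?\<eta> \<alpha> b\<bar> \<le> 1" if "\<alpha> \<in> mindex p" for \<alpha>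
  proof -
    have "dist a b ^ (p - mabs \<beta>) \<le> dist a b"
      using power_decreasing[of 1 "p - mabs \<beta>" "dist a b"] assms(6) \<beta> by simp
    moreover have "dist a b * \<bar>inverse c\<bar> \<le> 1"
      using assms(7) by (cases "c = 0") (auto simp: abs_inverse field_simps)
    ultimately have "dist a b ^ (p - mabs \<beta>) * \<bar>inverse c\<bar> \<le> 1"
      by (meson abs_ge_zero mult_right_mono order_trans)
    then have "dist a b ^ (p - mabs \<beta>) * \<bar>inverse c\<bar> / mfact \<beta> \<le> 1"
      using mfact_ge_1[of \<beta>] by (simp add: divide_le_eq)
    moreover have "xi_at ?\<eta> \<alpha> b = inverse c * xi_at \<eta> \<alpha> b"
      by (simp add: xi_at_def)
    ultimately show ?thesis
      using mfact_ge_1[of \<beta>] by (simp add: dual_monomial_xi_at[OF \<eta> that] abs_mult)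
  qed
  ultimately show ?thesis
    using assms linear_bundle_subset unfolding DeltaB_def by blast
qed

lemma rho_dual_monomial_step:
  assumes E: "linear_bundle p X E" and a: "a \<in> interior X"
    and \<beta>': "\<beta>(i := Suc (\<beta> i)) \<in> mindex p"
    and hyp: "\<And>b. b \<in> interior X \<Longrightarrow> \<exists>\<xi>. (b, \<xi>) \<in> E \<and> dual_monomial p b \<beta> \<xi>"
  shows "\<exists>\<zeta>. (a, \<zeta>) \<in> rho p X E \<and> dual_monomial p a (\<beta>(i := Suc (\<beta> i))) \<zeta>"
proof -
  have \<beta>: "\<beta> \<in> mindex p" "Suc (mabs \<beta>) \<le> p"
    using \<beta>' mabs_fun_upd[of \<beta> i "Suc (\<beta> i)"] by (auto simp: mindex_def)
  obtain \<epsilon> where \<epsilon>: "\<And>b. b \<in> interior X \<Longrightarrow> (b, \<epsilon> b) \<in> E \<and> dual_monomial p b \<beta> (\<epsilon> b)"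
    using hyp by metis
  have \<epsilon>_Pdual: "\<epsilon> b \<in> Pdual p" if "b \<in> interior X" for b
    using \<epsilon>[OF that] by (simp add: dual_monomial_def)
  obtain r where r: "0 < r" "r \<le> 1" "ball a r \<subseteq> interior X"
  proof -
    obtain r where "0 < r" "ball a r \<subseteq> interior X"
      using a open_interior open_contains_ball by blast
    then show thesis
      using that[of "min 1 r"] subset_ball[of "min 1 r" r a] by auto
  qed
  define h where "h m = r / Suc (Suc m)" for m
  have h: "0 < h m" "h m < r" "h m \<le> 1" for m
    using r by (auto simp: h_def field_simps add_pos_nonneg)
  have "h \<longlonglongrightarrow> 0"
    unfolding h_def by (intro LIMSEQ_Suc lim_const_over_n)
  then have h_at_0: "filterlim h (at 0) sequentially"
    using h(1) by (simp add: filterlim_at less_imp_neq[symmetric])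
  define b where "b m = a + h m *\<^sub>R axis i 1" for m
  have dist_b: "dist a (b m) = h m" for m
    using h(1)[of m] by (simp add: b_def dist_norm)
  have b: "b m \<in> interior X" for m
    using r(3) dist_b[of m] h(2)[of m] by auto
  have "b \<longlonglongrightarrow> a"
    unfolding b_def using \<open>h \<longlonglongrightarrow> 0\<close> by (auto intro!: tendsto_eq_intros)
  define k where "k = real (Suc (\<beta> i))"
  define \<zeta>s where "\<zeta>s m = (\<lambda>f. (\<epsilon> (b m) f - \<epsilon> a f) / (h m * k))" for m
  have \<Delta>: "(a, b m, \<zeta>s m) \<in> DeltaB p X E" for m
    unfolding \<zeta>s_def
  proof (rule DeltaB_difference_quotient[OF E _ _ _ \<beta>(2)])
    show "dist a (b m) \<le> \<bar>h m * k\<bar>"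
      using h(1)[of m] by (simp add: dist_b k_def)
  qed (use \<epsilon> a b h dist_b in auto)
  have "\<zeta>s m \<in> Pdual p" for m
    using Pdual_lincomb[OF \<epsilon>_Pdual[OF b] \<epsilon>_Pdual[OF a],
        of "inverse (h m * k)" m "- inverse (h m * k)"]
    by (simp add: \<zeta>s_def divide_inverse algebra_simps)
  moreover have "(\<lambda>m. \<zeta>s m (monomial_at a \<gamma>)) \<longlonglongrightarrow> (if \<gamma> = \<beta>(i := Suc (\<beta> i)) then 1 else 0)"
    if \<gamma>: "\<gamma> \<in> mindex p" for \<gamma>
  proof -
    let ?q = "\<lambda>t. (mbinomial \<gamma> \<beta> (t *\<^sub>R axis i 1) - (if \<gamma> = \<beta> then 1 else 0)) / t"
    have "\<zeta>s m (monomial_at a \<gamma>) = ?q (h m) / k" for m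
      using dual_monomial_shift[of p "b m" \<beta> "\<epsilon> (b m)" \<gamma> "h m *\<^sub>R axis i 1"] \<epsilon>[OF b] \<epsilon>[OF a] \<beta> \<gamma>
      by (simp add: \<zeta>s_def b_def dual_monomial_def)
    moreover have "(\<lambda>m. ?q (h m) / k) \<longlonglongrightarrow> (if \<gamma> = \<beta>(i := Suc (\<beta> i)) then k else 0) / k"
      unfolding k_def
      by (intro tendsto_divide tendsto_const filterlim_compose[OF tendsto_mbinomial_axis_quotient h_at_0]) simp
    moreover have "(if \<gamma> = \<beta>(i := Suc (\<beta> i)) then k else 0) / k = (if \<gamma> = \<beta>(i := Suc (\<beta> i)) then 1 else 0)"
      by (simp add: k_def)
    ultimately show ?thesis
      by (simp only:)
  qed
  ultimately obtain \<zeta> where \<zeta>: "\<zeta> \<in> Pdual p" "\<zeta>s \<longlonglongrightarrow> \<zeta>"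
      "dual_monomial p a (\<beta>(i := Suc (\<beta> i))) \<zeta>"
    by (rule Pdual_tendsto[OF trivial_limit_sequentially]) (auto simp: dual_monomial_def)
  have "(\<lambda>m. (a, b m, \<zeta>s m)) \<longlonglongrightarrow> (a, a, \<zeta>)"
    by (intro tendsto_Pair tendsto_const \<open>b \<longlonglongrightarrow> a\<close> \<zeta>(2))
  then have "(a, a, \<zeta>) \<in> closure (DeltaB p X E)"
    by (rule Lim_in_closed_set[OF closed_closure _ trivial_limit_sequentially, rotated])
      (use \<Delta> closure_subset in \<open>blast intro: always_eventually\<close>)
  then show ?thesis
    using rho_memI[OF interior_subset[THEN subsetD, OF a] \<zeta>(1)] \<zeta>(3) by blast
qed

lemma rho_iterate_dual_monomial:
  assumes "a \<in> interior X" "\<beta> \<in> mindex p" "mabs \<beta> \<le> k"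
  shows "\<exists>\<xi>. (a, \<xi>) \<in> (rho p X ^^ k) (E0 p X) \<and> dual_monomial p a \<beta> \<xi>"
  using assms
proof (induction k arbitrary: a \<beta>)
  case 0
  then have "\<beta> = (\<lambda>_. 0)" "a \<in> X"
    using mabs_eq_0_iff interior_subset by auto
  moreover have "delta p a (monomial_at a \<gamma>) = mpow 0 \<gamma>" if "\<gamma> \<in> mindex p" for \<gamma>
    using that by (simp add: delta_def monomial_at_in_Poly) (simp add: monomial_at_def)
  ultimately have "(a, delta p a) \<in> E0 p X" "dual_monomial p a \<beta> (delta p a)"
    by (auto simp: E0_def dual_monomial_def delta_in_Pdual mpow_0 intro!: exI[of _ 1])
  then show ?case by auto
next
  case (Suc k)
  show ?case
  proof (cases "mabs \<beta> \<le> k")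
    case True
    then show ?thesis
      using Suc subset_rho[OF linear_bundle_rho_iterate] by fastforce
  next
    case False
    with Suc.prems have "mabs \<beta> = Suc k" by simp
    then obtain i where "\<beta> i > 0"
      using mabs_eq_0_iff[of \<beta>] by (auto simp: fun_eq_iff)
    define \<beta>\<^sub>0 where "\<beta>\<^sub>0 = \<beta>(i := \<beta> i - 1)"
    have \<beta>: "\<beta> = \<beta>\<^sub>0(i := Suc (\<beta>\<^sub>0 i))"
      using \<open>\<beta> i > 0\<close> by (auto simp: \<beta>\<^sub>0_def)
    have "mabs \<beta>\<^sub>0 = k"
      using mabs_fun_upd[of \<beta> i "\<beta> i - 1"] \<open>mabs \<beta> = Suc k\<close> \<open>\<beta> i > 0\<close> by (simp add: \<beta>\<^sub>0_def)
    with Suc.prems(2) \<open>mabs \<beta> = Suc k\<close> have "\<beta>\<^sub>0 \<in> mindex p"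
      by (simp add: mindex_def)
    show ?thesis
      using rho_dual_monomial_step[OF linear_bundle_rho_iterate Suc.prems(1), of \<beta>\<^sub>0 i]
        Suc.IH[OF _ \<open>\<beta>\<^sub>0 \<in> mindex p\<close>] \<open>mabs \<beta>\<^sub>0 = k\<close> Suc.prems(2)
      by (simp flip: \<beta>)
  qed
qed

lemma linear_bundle_full_fibre:
  fixes a :: "real^'n::finite"
  assumes E: "linear_bundle p X E" and "a \<in> X"
    and dual: "\<And>\<beta>. \<beta> \<in> mindex p \<Longrightarrow> \<exists>\<xi>. (a, \<xi>) \<in> E \<and> dual_monomial p a \<beta> \<xi>"
    and "\<psi> \<in> Pdual p"
  shows "(a, \<psi>) \<in> E"
proof -
  obtain \<epsilon> where \<epsilon>: "\<And>\<beta>. \<beta> \<in> mindex p \<Longrightarrow> (a, \<epsilon> \<beta>) \<in> E \<and> dual_monomial p a \<beta> (\<epsilon> \<beta>)"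
    using dual by metis
  let ?\<psi> = "\<lambda>f. \<Sum>\<beta>\<in>mindex p. \<psi> (monomial_at a \<beta>) * \<epsilon> \<beta> f"
  have "(a, ?\<psi>) \<in> E"
    using \<epsilon> by (intro linear_bundle_sum[OF E \<open>a \<in> X\<close> finite_mindex]) blast
  moreover have "\<psi> = ?\<psi>"
  proof (rule Pdual_eqI[OF \<open>\<psi> \<in> Pdual p\<close>])
    show "?\<psi> \<in> Pdual p"
      using calculation E linear_bundle_subset by blast
    fix \<gamma> :: "'n \<Rightarrow> nat" assume "\<gamma> \<in> mindex p"
    then have "?\<psi> (monomial_at a \<gamma>) = (\<Sum>\<beta>\<in>mindex p. if \<beta> = \<gamma> then \<psi> (monomial_at a \<beta>) else 0)"
      using \<epsilon> by (intro sum.cong) (auto simp: dual_monomial_def)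
    then show "\<psi> (monomial_at a \<gamma>) = ?\<psi> (monomial_at a \<gamma>)"
      using \<open>\<gamma> \<in> mindex p\<close> by (simp add: finite_mindex)
  qed
  ultimately show ?thesis by simp
qed

lemma rho_full_on_closure:
  fixes X :: "(real^'n::finite) set"
  assumes E: "linear_bundle p X E" and "X \<subseteq> closure S" and full: "S \<times> Pdual p \<subseteq> E"
  shows "X \<times> Pdual p \<subseteq> rho p X E"
proof clarify
  fix a and \<psi> :: "(real^'n \<Rightarrow> real) \<Rightarrow> real" assume "a \<in> X" "\<psi> \<in> Pdual p"
  have "S \<subseteq> (\<lambda>x. (x, x, \<psi>)) -` closure (DeltaB p X E)"
    using full \<open>\<psi> \<in> Pdual p\<close> DeltaB_diagI[OF E] closure_subset by fast
  moreover have "closed ((\<lambda>x. (x, x, \<psi>)) -` closure (DeltaB p X E))"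
    by (intro continuous_closed_vimage closed_closure continuous_intros)
  ultimately have "closure S \<subseteq> (\<lambda>x. (x, x, \<psi>)) -` closure (DeltaB p X E)"
    by (rule closure_minimal)
  then show "(a, \<psi>) \<in> rho p X E"
    using assms(2) \<open>a \<in> X\<close> \<open>\<psi> \<in> Pdual p\<close> by (auto intro: rho_memI)
qed

lemma rho_iterate_eq_full:
  fixes X :: "(real^'n::finite) set"
  assumes "X \<subseteq> closure (interior X)" "p < k"
  shows "(rho p X ^^ k) (E0 p X) = X \<times> Pdual p"
proof -
  let ?F = "\<lambda>k. (rho p X ^^ k) (E0 p X)"
  have "interior X \<times> Pdual p \<subseteq> ?F p"
  proof clarify
    fix a and \<psi> :: "(real^'n \<Rightarrow> real) \<Rightarrow> real"
    assume a: "a \<in> interior X" and "\<psi> \<in> Pdual p"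
    have "\<exists>\<xi>. (a, \<xi>) \<in> ?F p \<and> dual_monomial p a \<beta> \<xi>" if "\<beta> \<in> mindex p" for \<beta>
      using rho_iterate_dual_monomial[OF a that] that by (simp add: mindex_def)
    then show "(a, \<psi>) \<in> ?F p"
      using linear_bundle_full_fibre[OF linear_bundle_rho_iterate] a interior_subset \<open>\<psi> \<in> Pdual p\<close>
      by blast
  qed
  then have "X \<times> Pdual p \<subseteq> ?F (Suc p)"
    using rho_full_on_closure[OF linear_bundle_rho_iterate assms(1)] by simp
  moreover have "?F j \<subseteq> ?F (Suc j)" for j
    using subset_rho[OF linear_bundle_rho_iterate] by simp
  ultimately have "X \<times> Pdual p \<subseteq> ?F k"
    using lift_Suc_mono_le[of ?F "Suc p" k] assms(2) by simp
  then show ?thesis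
    using linear_bundle_rho_iterate[unfolded linear_bundle_def] by blast
qed

theorem lemma4p20:
  fixes X U :: "(real^'n::finite) set" and p :: nat
  assumes "open U" and "X \<subseteq> U" and "X = U \<inter> closure (interior X)"
  shows "tau p X = X \<times> Pdual p"
proof -
  have "p < 2 * rdim p TYPE('n)"
    using card_mindex_ge[of p, where 'n = 'n] by (simp add: rdim_def)
  moreover have "X \<subseteq> closure (interior X)"
    using assms(3) by blast
  ultimately show ?thesis
    unfolding tau_def by (rule rho_iterate_eq_full[rotated])
qed

end
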